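(* Assume (A1). Let $g:\mathcal X\to\mathbb R$ with $0<\|\nabla g\|_\infty\le\|g\|_\infty$, and let $u$ be the solution of problem (P) with boundary data $g|_\Gamma$. Then for any two neighbors $x,y$ in the graph (i.e. $w_{xy}>0$), $$|u(x)-u(y)|\le\left(\frac{4\log\big(\|g\|_\infty\|\nabla g\|_\infty^{-1}\big)}{1-\alpha+2\alpha\delta}+5\right)\|\nabla g\|_\infty.$$
   Context: $\mathcal X$ is a finite vertex set and $W=(w_{xy})$ a symmetric matrix of nonnegative weights defining a connected graph, with degrees $d_x=\sum_{y}w_{xy}$ and neighbor sets $N_x=\{y\in\mathcal X:w_{xy}>0\}$. For $p\ge2$, $\alpha=1/(p-1)$, and $$\mathcal L_p u(x)=\alpha\,\frac{1}{d_x}\sum_{y}w_{xy}\big(u(x)-u(y)\big)+(1-\alpha)\Big(u(x)-\tfrac12\big(\max_{N_x}u+\min_{N_x}u\big)\Big).$$ $\Gamma\subset\mathcal X$ is the set of labeled vertices. Problem (P): find $u:\mathcal X\to\mathbb R$ with $\mathcal L_pu(x)=0$ for $x\in\mathcal X\setminus\Gamma$ and $u=g$ on $\Gamma$; it has a unique solution. Assumption (A1): $\Gamma\cap N_x\neq\varnothing$ for every $x\in\mathcal X$. Notation: $\|g\|_\infty=\max_{x\in\mathcal X}|g(x)|$, $\|\nabla g\|_\infty=\max_{x,y\in\mathcal X}|g(x)-g(y)|\mathbb 1_{w_{xy}>0}$, and $$\delta=\min_{x\in\mathcal X}\frac{\sum_{y\in\mathcal X}w_{xy}\mathbb 1_{y\in\Gamma}}{\sum_{z\in\mathcal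 X}w_{xz}}.$$ *)

theory Defs
  imports Complex_Main
begin

text \<open>Vertices form a finite type 'a (the set X is UNIV). Weights w :: 'a => 'a => real.\<close>

definition deg :: "('a::finite \<Rightarrow> 'a \<Rightarrow> real) \<Rightarrow> 'a \<Rightarrow> real" where
  "deg w x = (\<Sum>y\<in>UNIV. w x y)"

definition nbrs :: "('a::finite \<Rightarrow> 'a \<Rightarrow> real) \<Rightarrow> 'a \<Rightarrow> 'a set" where
  "nbrs w x = {y. w x y > 0}"

definition graph_connected :: "('a::finite \<Rightarrow> 'a \<Rightarrow> real) \<Rightarrow> bool" where
  "graph_connected w \<longleftrightarrow> (\<forall>x y. (\<lambda>a b. 0 < w a b)\<^sup>*\<^sup>* x y)"

definition alpha_p :: "real \<Rightarrow> real" where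
  "alpha_p p = 1 / (p - 1)"

definition Lp :: "real \<Rightarrow> ('a::finite \<Rightarrow> 'a \<Rightarrow> real) \<Rightarrow> ('a \<Rightarrow> real) \<Rightarrow> 'a \<Rightarrow> real" where
  "Lp p w u x =
     alpha_p p * (1 / deg w x) * (\<Sum>y\<in>UNIV. w x y * (u x - u y))
     + (1 - alpha_p p) * (u x - (Max (u ` nbrs w x) + Min (u ` nbrs w x)) / 2)"

definition sup_norm :: "('a::finite \<Rightarrow> real) \<Rightarrow> real" where
  "sup_norm g = Max (range (\<lambda>x. \<bar>g x\<bar>))"

definition grad_norm :: "('a::finite \<Rightarrow> 'a \<Rightarrow> real) \<Rightarrow> ('a \<Rightarrow> real) \<Rightarrow> real" where
  "grad_norm w g = Max (range (\<lambda>(x, y). \<bar>g x - g y\<bar> * (if w x y > 0 then 1 else 0)))"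

definition delta :: "('a::finite \<Rightarrow> 'a \<Rightarrow> real) \<Rightarrow> 'a set \<Rightarrow> real" where
  "delta w \<Gamma> = Min (range (\<lambda>x. (\<Sum>y\<in>UNIV. w x y * (if y \<in> \<Gamma> then 1 else 0)) / (\<Sum>z\<in>UNIV. w x z)))"

definition assumption_A1 :: "('a::finite \<Rightarrow> 'a \<Rightarrow> real) \<Rightarrow> 'a set \<Rightarrow> bool" where
  "assumption_A1 w \<Gamma> \<longleftrightarrow> (\<forall>x. \<Gamma> \<inter> nbrs w x \<noteq> {})"

definition solves_P :: "real \<Rightarrow> ('a::finite \<Rightarrow> 'a \<Rightarrow> real) \<Rightarrow> 'a set \<Rightarrow> ('a \<Rightarrow> real) \<Rightarrow> ('a \<Rightarrow> real) \<Rightarrow> bool" where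
  "solves_P p w \<Gamma> g u \<longleftrightarrow> (\<forall>x. x \<notin> \<Gamma> \<longrightarrow> Lp p w u x = 0) \<and> (\<forall>x\<in>\<Gamma>. u x = g x)"

end

theory Submission
  imports Defs
begin

text \<open>At an unlabelled vertex the equation \<open>\<L>\<^sub>p u = 0\<close> writes \<open>u(x)\<close> as a convex combination
  of the weighted mean of \<open>u\<close> over \<open>N\<^sub>x\<close> and the midrange of \<open>u\<close> on \<open>N\<^sub>x\<close>. By (A1) a fraction
  at least \<open>\<delta>\<close> of the weight at every vertex sits on labelled neighbours, so the excess of
  \<open>u - h\<close> at its maximum is damped by the factor \<open>1 - c/2\<close>, \<open>c = 1 - \<alpha> + 2\<alpha>\<delta>\<close>, where \<open>h\<close> is
  any comparison function dominating \<open>g\<close> on \<open>\<Gamma>\<close> and growing by at most \<open>K\<close> along edges.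
  This gives \<open>u - h \<le> 2K/c\<close>. With \<open>h = \<parallel>g\<parallel>\<^sub>\<infinity>\<close>, \<open>K = 0\<close> it is the maximum principle
  \<open>|u| \<le> \<parallel>g\<parallel>\<^sub>\<infinity>\<close>; with \<open>h = g\<close>, \<open>K = \<parallel>\<nabla>g\<parallel>\<^sub>\<infinity>\<close> it gives \<open>|u - g| \<le> 2\<parallel>\<nabla>g\<parallel>\<^sub>\<infinity>/c\<close>, and lower
  bounds follow by applying both to \<open>-u\<close>. Hence \<open>|u(x) - u(y)|\<close> on an edge is at most both
  \<open>(4/c + 1)\<parallel>\<nabla>g\<parallel>\<^sub>\<infinity>\<close> and \<open>2\<parallel>g\<parallel>\<^sub>\<infinity>\<close>, and the logarithmic bound interpolates between the two.\<close>

lemma abs_le_sup_norm: "\<bar>g x\<bar> \<le> sup_norm g"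
  unfolding sup_norm_def by (rule Max_ge) auto

lemma abs_diff_le_grad_norm:
  assumes "w x y > 0"
  shows "\<bar>g x - g y\<bar> \<le> grad_norm w g"
proof -
  have "(\<lambda>(x, y). \<bar>g x - g y\<bar> * (if w x y > 0 then 1 else 0)) (x, y) \<le> grad_norm w g"
    unfolding grad_norm_def by (rule Max_ge[OF _ rangeI]) simp
  with assms show ?thesis by simp
qed

lemma grad_norm_nonneg: "0 \<le> grad_norm w g"
proof -
  have "(\<lambda>(x, y). \<bar>g x - g y\<bar> * (if w x y > 0 then 1 else 0)) (x, x) \<le> grad_norm w g"
    unfolding grad_norm_def by (rule Max_ge[OF _ rangeI]) simp
  then show ?thesis by simp
qed

lemma alpha_p_pos: "p \<ge> 2 \<Longrightarrow> 0 < alpha_p p"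
  by (simp add: alpha_p_def)

lemma alpha_p_le_one: "p \<ge> 2 \<Longrightarrow> alpha_p p \<le> 1"
  by (simp add: alpha_p_def)

lemma deg_pos_if_nbr:
  assumes nonneg: "\<And>x y. w x y \<ge> 0" and "w x z > 0"
  shows "0 < deg w x"
proof -
  have "w x z \<le> deg w x"
    unfolding deg_def by (rule member_le_sum) (auto simp: nonneg)
  with assms(2) show ?thesis by simp
qed

lemma delta_le_labelled_fraction:
  "delta w \<Gamma> \<le> (\<Sum>y\<in>UNIV. w x y * (if y \<in> \<Gamma> then 1 else 0)) / deg w x"
  unfolding delta_def deg_def by (rule Min_le) auto

lemma delta_pos:
  assumes nonneg: "\<And>x y. w x y \<ge> 0" and A1: "assumption_A1 w \<Gamma>"
  shows "0 < delta w \<Gamma>"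
proof -
  have "delta w \<Gamma> \<in> range (\<lambda>x. (\<Sum>y\<in>UNIV. w x y * (if y \<in> \<Gamma> then 1 else 0)) / deg w x)"
    unfolding delta_def deg_def by (rule Min_in) auto
  then obtain x where x: "delta w \<Gamma> = (\<Sum>y\<in>UNIV. w x y * (if y \<in> \<Gamma> then 1 else 0)) / deg w x"
    by blast
  from A1 obtain z where z: "z \<in> \<Gamma>" "w x z > 0"
    unfolding assumption_A1_def nbrs_def by blast
  have "w x z * (if z \<in> \<Gamma> then 1 else 0) \<le> (\<Sum>y\<in>UNIV. w x y * (if y \<in> \<Gamma> then 1 else 0))"
    by (rule member_le_sum) (auto simp: nonneg)
  with z have "0 < (\<Sum>y\<in>UNIV. w x y * (if y \<in> \<Gamma> then 1 else 0))" by simp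
  with x deg_pos_if_nbr[of w, OF nonneg z(2)] show ?thesis by simp
qed

lemma damping_pos:
  assumes "p \<ge> 2" and "\<And>x y. w x y \<ge> 0" and "assumption_A1 w \<Gamma>"
  shows "0 < 1 - alpha_p p + 2 * alpha_p p * delta w \<Gamma>"
  using alpha_p_pos[OF assms(1)] alpha_p_le_one[OF assms(1)] delta_pos[OF assms(2,3)]
  by (simp add: add_nonneg_pos)

lemma Lp_uminus:
  assumes "nbrs w x \<noteq> {}"
  shows "Lp p w (\<lambda>y. - u y) x = - Lp p w u x"
proof -
  have "Max ((\<lambda>y. - u y) ` nbrs w x) = - Min (u ` nbrs w x)"
    and "Min ((\<lambda>y. - u y) ` nbrs w x) = - Max (u ` nbrs w x)"
    using assms by (simp_all add: image_image)
  moreover have "(\<Sum>y\<in>UNIV. w x y * (- u x - - u y)) = - (\<Sum>y\<in>UNIV. w x y * (u x - u y))"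
    by (simp add: sum_negf[symmetric] algebra_simps)
  ultimately show ?thesis
    unfolding Lp_def by (simp add: field_simps)
qed

lemma solves_P_uminus:
  assumes "assumption_A1 w \<Gamma>" and "solves_P p w \<Gamma> g u"
  shows "solves_P p w \<Gamma> (\<lambda>x. - g x) (\<lambda>x. - u x)"
proof -
  have "nbrs w x \<noteq> {}" for x
    using assms(1) unfolding assumption_A1_def by blast
  with assms(2) show ?thesis
    by (simp add: solves_P_def Lp_uminus)
qed

lemma Lp_eq_zero_mean_value:
  assumes "0 < deg w x" and "Lp p w u x = 0"
  shows "u x = alpha_p p * ((\<Sum>y\<in>UNIV. w x y * u y) / deg w x)
      + (1 - alpha_p p) * ((Max (u ` nbrs w x) + Min (u ` nbrs w x)) / 2)"
proof -
  define S where "S = (\<Sum>y\<in>UNIV. w x y * u y)"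
  define m where "m = (Max (u ` nbrs w x) + Min (u ` nbrs w x)) / 2"
  have "(\<Sum>y\<in>UNIV. w x y * (u x - u y)) = deg w x * u x - S"
    by (simp add: S_def deg_def right_diff_distrib sum_subtractf sum_distrib_right)
  with assms(2) have "alpha_p p * (1 / deg w x) * (deg w x * u x - S) + (1 - alpha_p p) * (u x - m) = 0"
    by (simp add: Lp_def m_def)
  with assms(1) have "u x = alpha_p p * (S / deg w x) + (1 - alpha_p p) * m"
    by (simp add: field_simps)
  then show ?thesis
    by (simp add: S_def m_def)
qed

lemma weighted_mean_le:
  assumes nonneg: "\<And>x y. w x y \<ge> 0" and "0 < deg w x" and "E \<ge> 0"
    and nbr: "\<And>y. w x y > 0 \<Longrightarrow> u y \<le> A + E"
    and labelled_nbr: "\<And>y. y \<in> \<Gamma> \<Longrightarrow> w x y > 0 \<Longrightarrow> u y \<le> A"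
  shows "(\<Sum>y\<in>UNIV. w x y * u y) / deg w x \<le> A + E * (1 - delta w \<Gamma>)"
proof -
  define T where "T = (\<Sum>y\<in>UNIV. w x y * (if y \<in> \<Gamma> then 1 else (0::real)))"
  have "(\<Sum>y\<in>UNIV. w x y * u y) \<le> (\<Sum>y\<in>UNIV. w x y * (A + E - E * (if y \<in> \<Gamma> then 1 else 0)))"
  proof (rule sum_mono)
    fix y
    show "w x y * u y \<le> w x y * (A + E - E * (if y \<in> \<Gamma> then 1 else 0))"
      using nonneg[of x y] nbr[of y] labelled_nbr[of y]
      by (cases "w x y > 0") (auto intro: mult_left_mono)
  qed
  also have "\<dots> = (A + E) * deg w x - E * T"
    by (simp add: deg_def T_def algebra_simps sum.distrib sum_subtractf sum_distrib_left)
  finally have "(\<Sum>y\<in>UNIV. w x y * u y) / deg w x \<le> A + E * (1 - T / deg w x)"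
    using assms(2) by (simp add: field_simps)
  also have "\<dots> \<le> A + E * (1 - delta w \<Gamma>)"
    using delta_le_labelled_fraction[of w \<Gamma> x] \<open>E \<ge> 0\<close>
    by (simp add: T_def mult_left_mono)
  finally show ?thesis .
qed

lemma Lp_eq_zero_le_damped:
  assumes p: "p \<ge> 2" and nonneg: "\<And>x y. w x y \<ge> 0" and L: "Lp p w u x = 0"
    and z: "z \<in> \<Gamma>" "w x z > 0" and "E \<ge> 0"
    and nbr: "\<And>y. w x y > 0 \<Longrightarrow> u y \<le> A + E"
    and labelled_nbr: "\<And>y. y \<in> \<Gamma> \<Longrightarrow> w x y > 0 \<Longrightarrow> u y \<le> A"
  shows "u x \<le> A + E * (1 - (1 - alpha_p p + 2 * alpha_p p * delta w \<Gamma>) / 2)"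
proof -
  define a where "a = alpha_p p"
  have a: "0 \<le> a" "a \<le> 1"
    using alpha_p_pos[OF p] alpha_p_le_one[OF p] by (simp_all add: a_def)
  have deg: "0 < deg w x"
    using deg_pos_if_nbr[of w, OF nonneg z(2)] .
  have z_nbr: "z \<in> nbrs w x"
    using z(2) by (simp add: nbrs_def)
  have "Max (u ` nbrs w x) \<le> A + E"
    using z_nbr nbr by (subst Max_le_iff) (auto simp: nbrs_def)
  moreover have "Min (u ` nbrs w x) \<le> u z"
    using z_nbr by (intro Min_le) auto
  then have "Min (u ` nbrs w x) \<le> A"
    using labelled_nbr[OF z] by simp
  ultimately have "(1 - a) * ((Max (u ` nbrs w x) + Min (u ` nbrs w x)) / 2) \<le> (1 - a) * (A + E / 2)"
    using a by (intro mult_left_mono) auto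
  moreover have "a * ((\<Sum>y\<in>UNIV. w x y * u y) / deg w x) \<le> a * (A + E * (1 - delta w \<Gamma>))"
    using weighted_mean_le[OF nonneg deg \<open>E \<ge> 0\<close> nbr labelled_nbr] a by (intro mult_left_mono)
  ultimately have "u x \<le> a * (A + E * (1 - delta w \<Gamma>)) + (1 - a) * (A + E / 2)"
    using Lp_eq_zero_mean_value[OF deg L] by (simp add: a_def)
  also have "\<dots> = A + E * (1 - (1 - a + 2 * a * delta w \<Gamma>) / 2)"
    by (simp add: field_simps)
  finally show ?thesis
    by (simp add: a_def)
qed

lemma solves_P_sub_le:
  assumes p: "p \<ge> 2" and nonneg: "\<And>x y. w x y \<ge> 0" and A1: "assumption_A1 w \<Gamma>"
    and sol: "solves_P p w \<Gamma> g u"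
    and h_labelled: "\<And>x. x \<in> \<Gamma> \<Longrightarrow> g x \<le> h x"
    and h_edge: "\<And>x y. w x y > 0 \<Longrightarrow> h y \<le> h x + K" and "K \<ge> 0"
  shows "u x - h x \<le> 2 * K / (1 - alpha_p p + 2 * alpha_p p * delta w \<Gamma>)"
proof -
  define c where "c = 1 - alpha_p p + 2 * alpha_p p * delta w \<Gamma>"
  have c: "0 < c"
    unfolding c_def using p nonneg A1 by (rule damping_pos)
  have "Max (range (\<lambda>y. u y - h y)) \<in> range (\<lambda>y. u y - h y)"
    by (rule Max_in) auto
  then obtain x0 where x0_max: "Max (range (\<lambda>y. u y - h y)) = u x0 - h x0"
    by blast
  have x0: "u y - h y \<le> u x0 - h x0" for y
    unfolding x0_max[symmetric] by (rule Max_ge) auto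
  define M where "M = u x0 - h x0"
  have "M \<le> 2 * K / c"
  proof (cases "M \<le> 0")
    case True
    moreover have "0 \<le> 2 * K / c"
      using c \<open>K \<ge> 0\<close> by simp
    ultimately show ?thesis by linarith
  next
    case False
    have u_labelled: "u y = g y" if "y \<in> \<Gamma>" for y
      using sol that by (simp add: solves_P_def)
    have "x0 \<notin> \<Gamma>"
      using False u_labelled[of x0] h_labelled[of x0] by (auto simp: M_def)
    then have L: "Lp p w u x0 = 0"
      using sol by (simp add: solves_P_def)
    obtain z where z: "z \<in> \<Gamma>" "w x0 z > 0"
      using A1 unfolding assumption_A1_def nbrs_def by blast
    have "u x0 \<le> (h x0 + K) + M * (1 - c / 2)"
      unfolding c_def
    proof (rule Lp_eq_zero_le_damped[OF p nonneg L z])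
      show "u y \<le> h x0 + K + M" if "w x0 y > 0" for y
        using x0[of y] h_edge[OF that] by (simp add: M_def)
      show "u y \<le> h x0 + K" if "y \<in> \<Gamma>" "w x0 y > 0" for y
        using u_labelled[OF that(1)] h_labelled[OF that(1)] h_edge[OF that(2)] by simp
    qed (use False in simp)
    moreover have "M * (1 - c / 2) = M - M * c / 2"
      by (simp add: algebra_simps)
    ultimately have "M * c \<le> 2 * K"
      by (simp add: M_def)
    then show ?thesis
      using c by (simp add: pos_le_divide_eq)
  qed
  then show ?thesis
    using x0[of x] by (simp add: M_def c_def)
qed

lemma solves_P_abs_le_sup_norm:
  assumes "p \<ge> 2" and "\<And>x y. w x y \<ge> 0" and A1: "assumption_A1 w \<Gamma>"
    and sol: "solves_P p w \<Gamma> g u"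
  shows "\<bar>u x\<bar> \<le> sup_norm g"
proof -
  note comparison = solves_P_sub_le[OF assms(1-3) _ _ _ order_refl, of _ _ "\<lambda>_. sup_norm g"]
  have "u x - sup_norm g \<le> 0"
    using comparison[OF sol] abs_le_sup_norm[of g] by (simp add: abs_le_iff)
  moreover have "- u x - sup_norm g \<le> 0"
    using comparison[OF solves_P_uminus[OF A1 sol]] abs_le_sup_norm[of g] by (simp add: abs_le_iff)
  ultimately show ?thesis by (simp add: abs_le_iff)
qed

lemma solves_P_abs_sub_le:
  assumes "p \<ge> 2" and "\<And>x y. w x y \<ge> 0" and A1: "assumption_A1 w \<Gamma>"
    and sol: "solves_P p w \<Gamma> g u"
  shows "\<bar>u x - g x\<bar> \<le> 2 * grad_norm w g / (1 - alpha_p p + 2 * alpha_p p * delta w \<Gamma>)"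
proof -
  note comparison = solves_P_sub_le[OF assms(1-3) _ _ _ grad_norm_nonneg]
  have "u x - g x \<le> 2 * grad_norm w g / (1 - alpha_p p + 2 * alpha_p p * delta w \<Gamma>)"
    using comparison[OF sol, of g] abs_diff_le_grad_norm[of w _ _ g] by (force simp: abs_le_iff)
  moreover have "- u x - - g x \<le> 2 * grad_norm w g / (1 - alpha_p p + 2 * alpha_p p * delta w \<Gamma>)"
    using comparison[OF solves_P_uminus[OF A1 sol], of "\<lambda>x. - g x"] abs_diff_le_grad_norm[of w _ _ g]
    by (force simp: abs_le_iff)
  ultimately show ?thesis by (simp add: abs_le_iff)
qed

lemma le_log_interpolation:
  fixes D G c X :: real
  assumes D: "0 < D" and DG: "D \<le> G" and c: "0 < c"
    and X_grad: "X \<le> (4 / c + 1) * D" and X_sup: "X \<le> 2 * G"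
  shows "X \<le> (4 * ln (G / D) / c + 5) * D"
proof -
  define r where "r = G / D"
  define L where "L = ln r"
  have r: "1 \<le> r"
    using D DG by (simp add: r_def)
  then have L: "0 \<le> L"
    by (simp add: L_def)
  have "X \<le> (4 * L / c + 5) * D"
  proof (cases "1 \<le> L + c")
    case True
    then have "4 / c \<le> 4 * L / c + 4"
      using c by (simp add: field_simps)
    then have "(4 / c + 1) * D \<le> (4 * L / c + 5) * D"
      using D by (intro mult_right_mono) auto
    with X_grad show ?thesis by simp
  next
    case False
    have "- L \<le> 1 / r - 1"
      using ln_le_minus_one[of "1 / r"] r by (simp add: L_def ln_div)
    then have "r * (1 - L) \<le> 1"
      using r by (simp add: field_simps)
    moreover have "c < 1 - L"
      using False by simp
    ultimately have "r \<le> 1 + L / (1 - L)"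
      using c by (simp add: field_simps)
    also have "L / (1 - L) \<le> L / c"
      using L c \<open>c < 1 - L\<close> by (intro divide_left_mono) auto
    finally have "2 * r \<le> 4 * L / c + 5"
      using L c by (simp add: field_simps)
    then have "2 * G \<le> (4 * L / c + 5) * D"
      using D by (simp add: r_def field_simps)
    with X_sup show ?thesis by simp
  qed
  then show ?thesis
    by (simp add: L_def r_def)
qed

theorem mainTheorem5:
  fixes w :: "'a::finite \<Rightarrow> 'a \<Rightarrow> real" and p :: real and \<Gamma> :: "'a set"
    and g u :: "'a \<Rightarrow> real"
  assumes p: "p \<ge> 2"
    and nonneg: "\<And>x y. w x y \<ge> 0"
    and sym: "\<And>x y. w x y = w y x"
    and conn: "graph_connected w"
    and A1: "assumption_A1 w \<Gamma>"
    and g_pos: "0 < grad_norm w g"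
    and g_le: "grad_norm w g \<le> sup_norm g"
    and sol: "solves_P p w \<Gamma> g u"
  shows "\<forall>x y. w x y > 0 \<longrightarrow>
           \<bar>u x - u y\<bar> \<le> (4 * ln (sup_norm g / grad_norm w g)
                 / (1 - alpha_p p + 2 * alpha_p p * delta w \<Gamma>) + 5) * grad_norm w g"
proof (intro allI impI)
  fix x y assume xy: "w x y > 0"
  define G where "G = sup_norm g"
  define D where "D = grad_norm w g"
  define c where "c = 1 - alpha_p p + 2 * alpha_p p * delta w \<Gamma>"
  have u_sup: "\<bar>u v\<bar> \<le> G" for v
    unfolding G_def using p nonneg A1 sol by (rule solves_P_abs_le_sup_norm)
  have u_near_g: "\<bar>u v - g v\<bar> \<le> 2 * D / c" for v
    unfolding D_def c_def using p nonneg A1 sol by (rule solves_P_abs_sub_le)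
  have X_sup: "\<bar>u x - u y\<bar> \<le> 2 * G"
    using u_sup[of x] u_sup[of y] by linarith
  have "\<bar>g x - g y\<bar> \<le> D"
    unfolding D_def using xy by (rule abs_diff_le_grad_norm)
  then have "\<bar>u x - u y\<bar> \<le> 2 * (2 * D / c) + D"
    using u_near_g[of x] u_near_g[of y] by linarith
  then have X_grad: "\<bar>u x - u y\<bar> \<le> (4 / c + 1) * D"
    by (simp add: field_simps)
  show "\<bar>u x - u y\<bar> \<le> (4 * ln (G / D) / c + 5) * D"
    using le_log_interpolation[OF _ _ _ X_grad X_sup] damping_pos[OF p nonneg A1] g_pos g_le
    by (simp add: G_def D_def c_def)
qed

end
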